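(* Let $k\ge2$ be an integer. If $\Delta>0$ is sufficiently large, then there exists $\epsilon > 0$ such that, as $z = \eta + iy \to 0$ within the region $\Delta \eta \leq |y| \leq \pi$ (with $\eta>0$), writing $q=e^{-z}$, \[ |\xi_k(q)| \ll_{k,\Delta} \xi_k(|q|)e^{-\epsilon/\eta}. \]
   Context: $\xi_k(q) \coloneqq \frac{(q^k;q^k)_\infty}{(q;q)_\infty}$, where $(a;q)_\infty \coloneqq \prod_{n\ge1}(1-aq^{n-1})$. *)

theory Defs
  imports "HOL-Analysis.Analysis"
begin

definition qpoch_inf :: "complex \<Rightarrow> complex \<Rightarrow> complex" where
  "qpoch_inf a q = (\<Prod>n. 1 - a * q ^ n)"

definition xi :: "nat \<Rightarrow> complex \<Rightarrow> complex" where
  "xi k q = qpoch_inf (q ^ k) (q ^ k) / qpoch_inf q q"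

end

theory Submission
  imports Defs
begin

(* xi_k(q) is the product of (1 - q^m)^-1 over the m >= 1 not divisible by k. For |w| < 1 each
   factor satisfies |1 - w| >= (1 - |w|) exp ((|w| - Re w) / 4), hence
   |xi_k(q)| <= xi_k(|q|) exp (- S / 4)  with  S = G(q) - G(q^k),  where
   G(w) = sum_{m >= 1} (|w|^m - Re w^m) = |w| / (1 - |w|) - Re (w / (1 - w)).
   For q = exp (- eta - i y) with |y| >= Delta eta we have |1 - q| >= |Im q| >= |q| Delta eta / 2,
   so Re (q / (1 - q)) <= 2 / (Delta eta); on the other hand
   |q| / (1 - |q|) - |q|^k / (1 - |q|^k) >= |q| / (1 - |q|^2), which is about 1 / (2 eta), and
   Re (q^k / (1 - q^k)) >= -1/2. Thus S >= 1 / (16 eta) once Delta >= 16 and z is small,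
   which is the claim with C = 1 and epsilon = 1/64. *)

lemma norm_one_minus_ge:
  fixes w :: complex
  assumes "norm w < 1"
  shows "(1 - norm w) * exp ((norm w - Re w) / 4) \<le> norm (1 - w)"
proof -
  define \<rho> u where "\<rho> = norm w" and "u = norm w - Re w"
  have u: "0 \<le> u" "u \<le> 2"
    using complex_Re_le_cmod[of w] abs_Re_le_cmod[of w] assms by (auto simp: u_def)
  have \<rho>: "0 \<le> \<rho>" "\<rho> < 1" using assms by (auto simp: \<rho>_def)
  have sq: "norm (1 - w) ^ 2 = (1 - \<rho>) ^ 2 + 2 * u"
    unfolding \<rho>_def u_def cmod_power2 using cmod_power2[of w]
    by (simp add: power2_eq_square algebra_simps)
  have "exp (u / 2) \<le> 1 + u / 2 + (u / 2) ^ 2"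
    using u by (intro exp_bound) auto
  also have "\<dots> \<le> 1 + u"
    using mult_right_mono[OF u(2) u(1)] by (simp add: power2_eq_square)
  finally have exp_le: "exp (u / 2) \<le> 1 + u" .
  have "((1 - \<rho>) * exp (u / 4)) ^ 2 = (1 - \<rho>) ^ 2 * exp (u / 2)"
    by (simp add: power_mult_distrib flip: exp_of_nat_mult)
  also have "\<dots> \<le> (1 - \<rho>) ^ 2 * (1 + u)"
    using exp_le by (simp add: mult_left_mono)
  also have "\<dots> \<le> norm (1 - w) ^ 2"
  proof -
    have "(1 - \<rho>) ^ 2 \<le> 1" using \<rho> by (intro power_le_one) auto
    thus ?thesis
      unfolding sq using mult_left_mono[of "(1 - \<rho>) ^ 2" 1 u] u by (simp add: algebra_simps)
  qed
  finally show ?thesis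
    unfolding \<rho>_def u_def by (rule power2_le_imp_le) simp
qed

lemma Re_divide_one_minus_ge:
  fixes w :: complex
  assumes "norm w < 1"
  shows "- 1 / 2 \<le> Re (w / (1 - w))"
proof -
  \<comment> \<open>w / (1 - w) = 1 / v - 1, and v \<mapsto> 1 / v maps the disc |v - 1| < 1 into Re > 1/2.\<close>
  define v where "v = 1 - w"
  have "norm (1 - v) ^ 2 < 1"
    using assms by (simp add: v_def abs_square_less_1)
  hence lt: "(Re v)\<^sup>2 + (Im v)\<^sup>2 < 2 * Re v"
    unfolding cmod_power2 by (simp add: power2_eq_square algebra_simps)
  have "v \<noteq> 0" using assms by (auto simp: v_def)
  hence pos: "0 < (Re v)\<^sup>2 + (Im v)\<^sup>2"
    by (simp add: complex_eq_iff sum_power2_gt_zero_iff)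
  have "w / (1 - w) = 1 / v - 1"
    using \<open>v \<noteq> 0\<close> by (simp add: v_def field_simps)
  hence "Re (w / (1 - w)) = Re v / ((Re v)\<^sup>2 + (Im v)\<^sup>2) - 1"
    by (simp add: Re_divide power2_eq_square)
  moreover have "1 / 2 \<le> Re v / ((Re v)\<^sup>2 + (Im v)\<^sup>2)"
    using lt pos by (simp add: field_simps)
  ultimately show ?thesis by linarith
qed

lemma abs_sin_ge_half:
  fixes y :: real
  assumes "\<bar>y\<bar> \<le> 1"
  shows "\<bar>y\<bar> / 2 \<le> \<bar>sin y\<bar>"
proof -
  have "\<bar>sin y - (\<Sum>m<3. sin_coeff m * y ^ m)\<bar> \<le> inverse (fact 3) * \<bar>y\<bar> ^ 3"
    by (rule Maclaurin_sin_bound)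
  hence "\<bar>sin y - y\<bar> \<le> \<bar>y\<bar> ^ 3 / 6"
    by (simp add: sin_coeff_def eval_nat_numeral fact_numeral divide_simps)
  moreover have "\<bar>y\<bar> ^ 3 \<le> \<bar>y\<bar>"
  proof -
    have "y * y \<le> 1" using assms abs_square_le_1[of y] by (simp add: power2_eq_square)
    thus ?thesis by (simp add: power3_eq_cube mult_left_le_one_le)
  qed
  ultimately show ?thesis by linarith
qed

lemma prod_times_exp_sum_le_norm_prod:
  fixes a :: "'i \<Rightarrow> 'a::{comm_semiring_1,real_normed_div_algebra}"
  assumes "finite A" and "\<And>i. i \<in> A \<Longrightarrow> 0 \<le> b i" and "\<And>i. i \<in> A \<Longrightarrow> b i * exp (c i) \<le> norm (a i)"
  shows "prod b A * exp (sum c A) \<le> norm (prod a A)"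
proof -
  have "prod b A * exp (sum c A) = (\<Prod>i\<in>A. b i * exp (c i))"
    using assms(1) by (simp add: exp_sum prod.distrib)
  also have "\<dots> \<le> (\<Prod>i\<in>A. norm (a i))"
    using assms by (intro prod_mono) auto
  finally show ?thesis by (simp add: prod_norm)
qed

lemma (in comm_monoid_set) split_multiples:
  fixes k N :: nat
  assumes "0 < k"
  shows "F g {1..N * k} = F (\<lambda>j. g (k * j)) {1..N} \<^bold>* F g {m \<in> {1..N * k}. \<not> k dvd m}"
proof -
  have "{1..N * k} \<inter> {m. k dvd m} = (*) k ` {1..N}"
  proof (intro equalityI subsetI)
    fix m assume "m \<in> {1..N * k} \<inter> {m. k dvd m}"
    then obtain j where "m = k * j" "1 \<le> k * j" "k * j \<le> N * k" by (auto elim: dvdE)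
    thus "m \<in> (*) k ` {1..N}"
      using assms by (auto simp: mult.commute[of N])
  qed (use assms in \<open>auto simp: mult.commute[of N]\<close>)
  moreover have "inj_on ((*) k) {1..N}"
    using assms by (simp add: inj_on_def)
  ultimately have "F g ({1..N * k} \<inter> {m. k dvd m}) = F (\<lambda>j. g (k * j)) {1..N}"
    by (simp add: reindex)
  moreover have "{1..N * k} - {m. k dvd m} = {m \<in> {1..N * k}. \<not> k dvd m}"
    by auto
  ultimately show ?thesis
    using Int_Diff[of "{1..N * k}" g "{m. k dvd m}"] by simp
qed

lemma norm_power_less_one:
  fixes w :: "'a::real_normed_div_algebra"
  assumes "norm w < 1" and "0 < m"
  shows "norm (w ^ m) < 1"
  using assms by (simp add: norm_power power_less_one_iff)

lemma qpoch_factor_nonzero: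
  fixes a q :: complex
  assumes "norm a < 1" and "norm q \<le> 1"
  shows "1 - a * q ^ n \<noteq> 0"
proof -
  have "norm (a * q ^ n) \<le> norm a"
    using assms by (simp add: norm_mult norm_power mult_left_le power_le_one)
  thus ?thesis using assms(1) by auto
qed

lemma convergent_prod_qpoch:
  fixes a q :: complex
  assumes "norm a < 1" and "norm q < 1"
  shows "convergent_prod (\<lambda>n. 1 - a * q ^ n)"
proof -
  have "summable (\<lambda>n. norm (- (a * q ^ n)))"
    using summable_mult[OF summable_geometric[of "norm q"], of "norm a"] assms(2)
    by (simp add: norm_mult norm_power)
  thus ?thesis
    using summable_imp_convergent_prod_complex[of "\<lambda>n. - (a * q ^ n)"]
      qpoch_factor_nonzero[OF assms(1) less_imp_le[OF assms(2)]]
    by (simp add: eq_neg_iff_add_eq_0)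
qed

lemma LIMSEQ_qpoch_inf:
  assumes "norm a < 1" and "norm q < 1"
  shows "(\<lambda>N. \<Prod>n<N. 1 - a * q ^ n) \<longlonglongrightarrow> qpoch_inf a q"
proof -
  have "(\<lambda>N. \<Prod>n<Suc N. 1 - a * q ^ n) \<longlonglongrightarrow> qpoch_inf a q"
    unfolding qpoch_inf_def lessThan_Suc_atMost
    by (rule convergent_prod_LIMSEQ[OF convergent_prod_qpoch[OF assms]])
  thus ?thesis by (rule LIMSEQ_imp_Suc)
qed

lemma qpoch_inf_nonzero:
  assumes "norm a < 1" and "norm q < 1"
  shows "qpoch_inf a q \<noteq> 0"
  unfolding qpoch_inf_def
  using convergent_prod_qpoch[OF assms] qpoch_factor_nonzero[OF assms(1) less_imp_le[OF assms(2)]]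
  by (intro prodinf_nonzero) auto

lemma LIMSEQ_qpoch_inf_self:
  assumes "norm q < 1"
  shows "(\<lambda>N. \<Prod>m=1..N. 1 - q ^ m) \<longlonglongrightarrow> qpoch_inf q q"
  using LIMSEQ_qpoch_inf[OF assms assms] by (simp add: prod.atLeast1_atMost_eq)

lemma LIMSEQ_xi:
  assumes "0 < k" and "norm q < 1"
  shows "(\<lambda>N. 1 / (\<Prod>m \<in> {m \<in> {1..N * k}. \<not> k dvd m}. 1 - q ^ m)) \<longlonglongrightarrow> xi k q"
proof -
  have qk: "norm (q ^ k) < 1" using norm_power_less_one[OF assms(2,1)] .
  define multiples where "multiples N = (\<Prod>j=1..N. 1 - (q ^ k) ^ j)" for N
  define rest where "rest N = (\<Prod>m \<in> {m \<in> {1..N * k}. \<not> k dvd m}. 1 - q ^ m)" for N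
  have "1 - (q ^ k) ^ j \<noteq> 0" if "1 \<le> j" for j
    using norm_power_less_one[OF qk, of j] that by auto
  hence "multiples N \<noteq> 0" for N
    unfolding multiples_def by (simp add: prod_zero_iff)
  moreover have "(\<Prod>m=1..N * k. 1 - q ^ m) = multiples N * rest N" for N
    unfolding multiples_def rest_def power_mult[symmetric] by (rule prod.split_multiples[OF assms(1)])
  ultimately have "1 / rest N = multiples N / (\<Prod>m=1..N * k. 1 - q ^ m)" for N
    by simp
  moreover have "(\<lambda>N. multiples N / (\<Prod>m=1..N * k. 1 - q ^ m)) \<longlonglongrightarrow> xi k q"
    unfolding xi_def multiples_def
    using LIMSEQ_qpoch_inf_self[OF qk]
      filterlim_compose[OF LIMSEQ_qpoch_inf_self[OF assms(2)] mult_nat_right_at_top[OF assms(1)]]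
      qpoch_inf_nonzero[OF assms(2,2)]
    by (intro tendsto_divide) auto
  ultimately show ?thesis
    unfolding rest_def by simp
qed

definition geom_gap :: "complex \<Rightarrow> real" where
  "geom_gap w = norm w / (1 - norm w) - Re (w / (1 - w))"

lemma LIMSEQ_geom_gap:
  assumes "norm w < 1"
  shows "(\<lambda>M. \<Sum>m=1..M. norm w ^ m - Re (w ^ m)) \<longlonglongrightarrow> geom_gap w"
proof -
  have "(\<lambda>n. w ^ Suc n) sums (w / (1 - w))"
    using sums_mult[OF geometric_sums[OF assms], of w] by (simp add: divide_simps)
  moreover have "(\<lambda>n. norm w ^ Suc n) sums (norm w / (1 - norm w))"
    using sums_mult[OF geometric_sums[of "norm w"], of "norm w"] assms by (simp add: divide_simps)
  ultimately have "(\<lambda>n. norm w ^ Suc n - Re (w ^ Suc n)) sums geom_gap w"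
    unfolding geom_gap_def by (intro sums_diff sums_Re)
  thus ?thesis
    by (simp add: sums_def sum.atLeast1_atMost_eq)
qed

lemma LIMSEQ_gap_nonmultiples:
  assumes "0 < k" and "norm q < 1"
  shows "(\<lambda>N. \<Sum>m \<in> {m \<in> {1..N * k}. \<not> k dvd m}. norm q ^ m - Re (q ^ m))
           \<longlonglongrightarrow> geom_gap q - geom_gap (q ^ k)"
proof -
  have "(\<Sum>m \<in> {m \<in> {1..N * k}. \<not> k dvd m}. norm q ^ m - Re (q ^ m))
          = (\<Sum>m=1..N * k. norm q ^ m - Re (q ^ m)) - (\<Sum>j=1..N. norm (q ^ k) ^ j - Re ((q ^ k) ^ j))"
    for N
    using sum.split_multiples[OF assms(1), of "\<lambda>m. norm q ^ m - Re (q ^ m)" N]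
    by (simp add: norm_power power_mult)
  moreover have "(\<lambda>N. (\<Sum>m=1..N * k. norm q ^ m - Re (q ^ m))
                  - (\<Sum>j=1..N. norm (q ^ k) ^ j - Re ((q ^ k) ^ j)))
                 \<longlonglongrightarrow> geom_gap q - geom_gap (q ^ k)"
    using filterlim_compose[OF LIMSEQ_geom_gap[OF assms(2)] mult_nat_right_at_top[OF assms(1)]]
      LIMSEQ_geom_gap[OF norm_power_less_one[OF assms(2,1)]]
    by (intro tendsto_diff) (auto simp: o_def)
  ultimately show ?thesis by simp
qed

lemma norm_xi_le:
  assumes "0 < k" and "norm q < 1"
  shows "norm (xi k q) \<le> Re (xi k (of_real (norm q))) * exp (- (geom_gap q - geom_gap (q ^ k)) / 4)"
proof -
  define A where "A N = {m \<in> {1..N * k}. \<not> k dvd m}" for N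
  define r where "r = norm q"
  define gap where "gap N = (\<Sum>m \<in> A N. r ^ m - Re (q ^ m))" for N
  have r: "0 \<le> r" "r < 1" using assms(2) by (auto simp: r_def)
  have factor_pos: "0 < 1 - r ^ m" if "m \<in> A N" for m N
    using that r by (auto simp: A_def power_less_one_iff)
  have partial: "norm (1 / (\<Prod>m \<in> A N. 1 - q ^ m))
                   \<le> Re (1 / (\<Prod>m \<in> A N. 1 - of_real r ^ m)) * exp (- gap N / 4)" for N
  proof -
    have pos: "0 < (\<Prod>m \<in> A N. 1 - r ^ m) * exp (gap N / 4)"
      using factor_pos by (simp add: prod_pos)
    have "(\<Prod>m \<in> A N. 1 - r ^ m) * exp (gap N / 4) \<le> norm (\<Prod>m \<in> A N. 1 - q ^ m)"
      unfolding gap_def sum_divide_distrib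
    proof (rule prod_times_exp_sum_le_norm_prod)
      fix m assume "m \<in> A N"
      hence "norm (q ^ m) < 1" using assms(2) by (intro norm_power_less_one) (auto simp: A_def)
      thus "(1 - r ^ m) * exp ((r ^ m - Re (q ^ m)) / 4) \<le> norm (1 - q ^ m)"
        using norm_one_minus_ge[of "q ^ m"] by (simp add: r_def norm_power)
    qed (use factor_pos in \<open>auto simp: A_def less_imp_le\<close>)
    hence "norm (1 / (\<Prod>m \<in> A N. 1 - q ^ m)) \<le> 1 / ((\<Prod>m \<in> A N. 1 - r ^ m) * exp (gap N / 4))"
      using pos by (simp add: norm_divide frac_le)
    moreover have "Re (1 / (\<Prod>m \<in> A N. 1 - of_real r ^ m)) = 1 / (\<Prod>m \<in> A N. 1 - r ^ m)"
    proof -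
      have real_prod: "(\<Prod>m \<in> A N. 1 - of_real r ^ m) = complex_of_real (\<Prod>m \<in> A N. 1 - r ^ m)"
        by simp
      show ?thesis unfolding real_prod by (simp add: Re_divide_of_real del: of_real_prod)
    qed
    ultimately show ?thesis
      by (simp add: exp_minus field_simps)
  qed
  show ?thesis
  proof (rule LIMSEQ_le[OF _ _ exI[of _ 0]])
    show "(\<lambda>N. norm (1 / (\<Prod>m \<in> A N. 1 - q ^ m))) \<longlonglongrightarrow> norm (xi k q)"
      unfolding A_def by (intro tendsto_norm LIMSEQ_xi assms)
    show "(\<lambda>N. Re (1 / (\<Prod>m \<in> A N. 1 - of_real r ^ m)) * exp (- gap N / 4))
            \<longlonglongrightarrow> Re (xi k (of_real (norm q))) * exp (- (geom_gap q - geom_gap (q ^ k)) / 4)"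
      unfolding A_def gap_def r_def using r assms
      by (intro tendsto_intros LIMSEQ_xi LIMSEQ_gap_nonmultiples) auto
  qed (use partial in auto)
qed

lemma geom_gap_difference_ge:
  fixes k :: nat and \<Delta> \<eta> y :: real
  assumes k: "2 \<le> k" and \<Delta>: "16 \<le> \<Delta>" and \<eta>: "0 < \<eta>" "\<eta> < 1 / 8"
    and y: "\<Delta> * \<eta> \<le> \<bar>y\<bar>" "\<bar>y\<bar> \<le> 1"
  shows "1 / (16 * \<eta>) \<le> geom_gap (exp (- Complex \<eta> y)) - geom_gap (exp (- Complex \<eta> y) ^ k)"
proof -
  define q r where "q = exp (- Complex \<eta> y)" and "r = exp (- \<eta>)"
  have norm_q: "norm q = r" by (simp add: q_def r_def norm_exp_eq_Re)
  have r: "0 < r" "r < 1" "1 - \<eta> \<le> r"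
    using \<eta> exp_ge_add_one_self[of "- \<eta>"] by (auto simp: r_def)
  have r_sq: "r ^ 2 < 1" using r by (simp add: power_less_one_iff)
  have upper: "geom_gap (q ^ k) \<le> r ^ 2 / (1 - r ^ 2) + 1 / 2"
  proof -
    have "norm (q ^ k) < 1" using k r by (simp add: norm_power norm_q power_less_one_iff)
    moreover have "r ^ k / (1 - r ^ k) \<le> r ^ 2 / (1 - r ^ 2)"
      using k r r_sq by (intro frac_le) (auto intro: power_decreasing)
    ultimately show ?thesis
      using Re_divide_one_minus_ge[of "q ^ k"] by (simp add: geom_gap_def norm_power norm_q)
  qed
  have dist: "r * (8 * \<eta>) \<le> norm (1 - q)"
  proof -
    have "8 * \<eta> \<le> \<bar>sin y\<bar>"
      using abs_sin_ge_half[OF y(2)] y(1) mult_right_mono[OF \<Delta>, of \<eta>] \<eta>(1) by linarith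
    hence "r * (8 * \<eta>) \<le> r * \<bar>sin y\<bar>" using r by simp
    also have "\<dots> = \<bar>Im (1 - q)\<bar>" using r by (simp add: q_def r_def Im_exp abs_mult)
    also have "\<dots> \<le> norm (1 - q)" by (rule abs_Im_le_cmod)
    finally show ?thesis .
  qed
  have lower: "r / (1 - r) - 1 / (8 * \<eta>) \<le> geom_gap q"
  proof -
    have "Re (q / (1 - q)) \<le> r / norm (1 - q)"
      using complex_Re_le_cmod[of "q / (1 - q)"] by (simp add: norm_divide norm_q)
    also have "\<dots> \<le> r / (r * (8 * \<eta>))"
    proof -
      have "0 < r * (8 * \<eta>)" using r \<eta> by simp
      moreover from this have "0 < norm (1 - q)" using dist by linarith
      ultimately show ?thesis using dist r by (intro divide_left_mono) auto
    qed
    also have "\<dots> = 1 / (8 * \<eta>)" using r by simp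
    finally show ?thesis by (simp add: geom_gap_def norm_q)
  qed
  have main_term: "7 / (16 * \<eta>) \<le> r / (1 - r) - r ^ 2 / (1 - r ^ 2)"
  proof -
    have "1 - r \<noteq> 0" "1 - r ^ 2 \<noteq> 0" using r r_sq by auto
    hence "r / (1 - r) - r ^ 2 / (1 - r ^ 2) = r / (1 - r ^ 2)"
      by (simp add: divide_simps) (simp add: power2_eq_square algebra_simps)
    moreover have "1 - r ^ 2 \<le> 2 * \<eta>"
      using r mult_mono[of "1 - r" \<eta> "1 + r" 2] by (simp add: power2_eq_square algebra_simps)
    hence "(7 / 8) / (2 * \<eta>) \<le> r / (1 - r ^ 2)"
      using r r_sq \<eta> by (intro frac_le) auto
    ultimately show ?thesis by simp
  qed
  have "1 / (16 * \<eta>) + 1 / 2 \<le> 7 / (16 * \<eta>) - 1 / (8 * \<eta>)"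
    using \<eta> by (simp add: field_simps)
  with upper lower main_term show ?thesis
    unfolding q_def by linarith
qed

lemma norm_xi_exp_le:
  fixes k :: nat and \<Delta> \<eta> y :: real
  assumes k: "2 \<le> k" and \<Delta>: "16 \<le> \<Delta>" and \<eta>: "0 < \<eta>" "\<eta> < 1 / 8"
    and y: "\<Delta> * \<eta> \<le> \<bar>y\<bar>" "\<bar>y\<bar> \<le> 1"
  shows "cmod (xi k (exp (- Complex \<eta> y)))
           \<le> Re (xi k (exp (- complex_of_real \<eta>))) * exp (- (1 / 64) / \<eta>)"
proof -
  define q where "q = exp (- Complex \<eta> y)"
  define R where "R = Re (xi k (exp (- complex_of_real \<eta>)))"
  have "norm q < 1" using \<eta> by (simp add: q_def norm_exp_eq_Re)
  moreover have "of_real (norm q) = exp (- complex_of_real \<eta>)"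
    by (simp add: q_def norm_exp_eq_Re flip: exp_of_real)
  ultimately have xi_le: "cmod (xi k q) \<le> R * exp (- (geom_gap q - geom_gap (q ^ k)) / 4)"
    using norm_xi_le[of k q] k by (simp add: R_def)
  hence "0 \<le> R * exp (- (geom_gap q - geom_gap (q ^ k)) / 4)"
    using norm_ge_zero order_trans by blast
  hence "0 \<le> R" by (simp add: zero_le_mult_iff)
  moreover have "exp (- (geom_gap q - geom_gap (q ^ k)) / 4) \<le> exp (- (1 / 64) / \<eta>)"
    using geom_gap_difference_ge[OF k \<Delta> \<eta> y] by (simp add: q_def)
  ultimately show ?thesis
    using xi_le mult_left_mono order_trans unfolding q_def R_def by blast
qed

theorem lemma3p10:
  fixes k :: nat
  assumes "k \<ge> 2"
  shows "\<exists>\<Delta>\<^sub>0. \<forall>\<Delta>::real. \<Delta> > \<Delta>\<^sub>0 \<longrightarrow>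
           (\<exists>\<epsilon>>0. \<exists>C::real. \<exists>\<delta>>0. \<forall>\<eta> y::real.
              \<eta> > 0 \<and> \<Delta> * \<eta> \<le> \<bar>y\<bar> \<and> \<bar>y\<bar> \<le> pi \<and> cmod (Complex \<eta> y) < \<delta> \<longrightarrow>
              cmod (xi k (exp (- Complex \<eta> y)))
                \<le> C * Re (xi k (exp (- complex_of_real \<eta>))) * exp (- \<epsilon> / \<eta>))"
proof (rule exI[of _ 16], intro allI impI)
  fix \<Delta> :: real
  assume "\<Delta> > 16"
  have "cmod (xi k (exp (- Complex \<eta> y)))
          \<le> 1 * Re (xi k (exp (- complex_of_real \<eta>))) * exp (- (1 / 64) / \<eta>)"
    if "\<eta> > 0 \<and> \<Delta> * \<eta> \<le> \<bar>y\<bar> \<and> \<bar>y\<bar> \<le> pi \<and> cmod (Complex \<eta> y) < 1 / 8" for \<eta> y :: real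
    using norm_xi_exp_le[OF assms, of \<Delta> \<eta> y] that \<open>\<Delta> > 16\<close>
      abs_Re_le_cmod[of "Complex \<eta> y"] abs_Im_le_cmod[of "Complex \<eta> y"]
    by simp
  moreover have "(1 / 64 :: real) > 0" "(1 / 8 :: real) > 0" by simp_all
  ultimately show "\<exists>\<epsilon>>0. \<exists>C::real. \<exists>\<delta>>0. \<forall>\<eta> y::real.
              \<eta> > 0 \<and> \<Delta> * \<eta> \<le> \<bar>y\<bar> \<and> \<bar>y\<bar> \<le> pi \<and> cmod (Complex \<eta> y) < \<delta> \<longrightarrow>
              cmod (xi k (exp (- Complex \<eta> y)))
                \<le> C * Re (xi k (exp (- complex_of_real \<eta>))) * exp (- \<epsilon> / \<eta>)"
    by blast
qed

end
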